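(* For every $v\in\Delta\setminus\mathcal C$, $\langle\nabla H(v),F(v)\rangle>0$; i.e. $H$ is a strict Lyapunov function for $F$ on $\Delta$.
   Context: Let $N\ge2$, $E=\{1,\dots,N\}$, $\alpha>1$, and let $A=(A_{i,j})_{i,j\le N}$ be a symmetric matrix with nonnegative entries, $A_{i,j}>0$ for $i\ne j$, and $\sum_j A_{i,j}$ independent of $i$. Let $\Delta=\{v\in\mathbb R_+^N:\ \sum_i v_i=1,\ v_i\le 3/4 \text{ whenever } A_{i,i}=0\}$. For $v\in\Delta$ let $v^\alpha=(v_1^\alpha,\dots,v_N^\alpha)$, $H(v)=\sum_{i,j}A_{i,j}v_i^\alpha v_j^\alpha$ (positive on $\Delta$; $\nabla H$ is its gradient computed from this formula) and $\pi_i(v)=v_i^\alpha(Av^\alpha)_i/H(v)$. Let $\imath$ be the nearest-point projection of $\{v:\sum_iv_i=1\}$ onto $\Delta$ and $F(v)=-v+\pi(\imath(v))$. The equilibrium set is $\mathcal C=\{v\in\Delta: F(v)=0\}$. *)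

theory Defs
  imports "HOL-Analysis.Analysis"
begin

definition vpow :: "real \<Rightarrow> real^'n \<Rightarrow> real^'n" where
  "vpow \<alpha> v = (\<chi> i. (v$i) powr \<alpha>)"

definition Hfun :: "real^'n^'n \<Rightarrow> real \<Rightarrow> real^'n \<Rightarrow> real" where
  "Hfun A \<alpha> v = (\<Sum>i\<in>UNIV. \<Sum>j\<in>UNIV. A$i$j * (v$i) powr \<alpha> * (v$j) powr \<alpha>)"

text \<open>Gradient of H, computed formally from the defining formula:
  dH/dv_k = alpha v_k^(alpha-1) sum_j (A_kj + A_jk) v_j^alpha.\<close>
definition gradH :: "real^'n^'n \<Rightarrow> real \<Rightarrow> real^'n \<Rightarrow> real^'n" where
  "gradH A \<alpha> v = (\<chi> k. \<alpha> * (v$k) powr (\<alpha> - 1) *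
       (\<Sum>j\<in>UNIV. (A$k$j + A$j$k) * (v$j) powr \<alpha>))"

definition piF :: "real^'n^'n \<Rightarrow> real \<Rightarrow> real^'n \<Rightarrow> real^'n" where
  "piF A \<alpha> v = (\<chi> i. (v$i) powr \<alpha> * (A *v vpow \<alpha> v)$i / Hfun A \<alpha> v)"

definition Delta :: "real^'n^'n \<Rightarrow> (real^'n) set" where
  "Delta A = {v. (\<forall>i. 0 \<le> v$i) \<and> (\<Sum>i\<in>UNIV. v$i) = 1 \<and>
                  (\<forall>i. A$i$i = 0 \<longrightarrow> v$i \<le> 3/4)}"

text \<open>Nearest-point projection onto Delta (used on the hyperplane sum v = 1).\<close>
definition iota :: "real^'n^'n \<Rightarrow> real^'n \<Rightarrow> real^'n" where
  "iota A v = closest_point (Delta A) v"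

definition Ffield :: "real^'n^'n \<Rightarrow> real \<Rightarrow> real^'n \<Rightarrow> real^'n" where
  "Ffield A \<alpha> v = - v + piF A \<alpha> (iota A v)"

definition Equil :: "real^'n^'n \<Rightarrow> real \<Rightarrow> (real^'n) set" where
  "Equil A \<alpha> = {v \<in> Delta A. Ffield A \<alpha> v = 0}"

end

theory Submission
  imports Defs
begin

text \<open>Write \<open>f\<^sub>k = v\<^sub>k\<^sup>\<alpha>\<^sup>-\<^sup>1 (A v\<^sup>\<alpha>)\<^sub>k\<close> for the fitness of type \<open>k\<close>. On \<open>\<Delta>\<close> the projection
  is the identity, \<open>H = \<Sum>\<^sub>k v\<^sub>k f\<^sub>k\<close> is the mean fitness, \<open>F\<^sub>k = v\<^sub>k (f\<^sub>k - H) / H\<close> is a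
  replicator field and, by symmetry of \<open>A\<close>, \<open>\<nabla>H = 2\<alpha> f\<close>. Hence
  \<open>\<langle>\<nabla>H, F\<rangle> = (2\<alpha>/H) \<Sum>\<^sub>k v\<^sub>k (f\<^sub>k - H)\<^sup>2\<close>, a weighted variance of the fitness, which
  vanishes only if \<open>f\<^sub>k = H\<close> wherever \<open>v\<^sub>k > 0\<close>, i.e. only at equilibria.
  Positivity of \<open>H\<close> uses that the off-diagonal entries are positive and that no
  single coordinate carries all the mass when the diagonal entry vanishes.\<close>

definition fitness :: "real^'n^'n \<Rightarrow> real \<Rightarrow> real^'n \<Rightarrow> 'n \<Rightarrow> real" where
  "fitness A \<alpha> v k = v$k powr (\<alpha> - 1) * (A *v vpow \<alpha> v)$k"

lemma mult_powr_minus_one: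
  fixes a \<alpha> :: real
  assumes "0 \<le> a"
  shows "a * a powr (\<alpha> - 1) = a powr \<alpha>"
  using assms by (cases "a = 0") (simp_all add: powr_mult_base)

lemma matrix_vector_mult_vpow:
  "(A *v vpow \<alpha> v)$k = (\<Sum>j\<in>UNIV. A$k$j * v$j powr \<alpha>)"
  by (simp add: matrix_vector_mult_def vpow_def)

lemma mult_fitness:
  assumes "0 \<le> v$k"
  shows "v$k * fitness A \<alpha> v k = v$k powr \<alpha> * (A *v vpow \<alpha> v)$k"
  unfolding fitness_def using mult_powr_minus_one[OF assms]
  by (simp add: mult.assoc[symmetric])

lemma Hfun_eq_sum_fitness:
  assumes "\<forall>i. 0 \<le> v$i"
  shows "Hfun A \<alpha> v = (\<Sum>k\<in>UNIV. v$k * fitness A \<alpha> v k)"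
  using assms
  by (simp add: mult_fitness matrix_vector_mult_vpow Hfun_def sum_distrib_left
      mult.commute mult.left_commute)

lemma piF_eq_fitness:
  assumes "0 \<le> v$k"
  shows "piF A \<alpha> v $ k = v$k * fitness A \<alpha> v k / Hfun A \<alpha> v"
  using assms by (simp add: piF_def mult_fitness)

lemma gradH_eq_fitness:
  assumes "\<forall>i j. A$i$j = A$j$i"
  shows "gradH A \<alpha> v $ k = 2 * \<alpha> * fitness A \<alpha> v k"
proof -
  have "(\<Sum>j\<in>UNIV. (A$k$j + A$j$k) * v$j powr \<alpha>) = 2 * (A *v vpow \<alpha> v)$k"
    using assms by (simp add: matrix_vector_mult_vpow sum_distrib_left algebra_simps)
  then show ?thesis by (simp add: gradH_def fitness_def)
qed

lemma iota_Delta: "v \<in> Delta A \<Longrightarrow> iota A v = v"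
  by (simp add: iota_def closest_point_self)

lemma Ffield_Delta:
  assumes "v \<in> Delta A"
  shows "Ffield A \<alpha> v $ k = v$k * fitness A \<alpha> v k / Hfun A \<alpha> v - v$k"
  using assms by (simp add: Ffield_def iota_Delta piF_eq_fitness Delta_def)

lemma Delta_exists_other_pos:
  assumes "v \<in> Delta A" and "v$i \<le> 3/4"
  obtains j where "j \<noteq> i" and "v$j > 0"
proof -
  have nonneg: "\<And>k. 0 \<le> v$k" and "(\<Sum>k\<in>UNIV. v$k) = 1"
    using assms(1) by (auto simp: Delta_def)
  then have "(\<Sum>k\<in>UNIV-{i}. v$k) > 0"
    using assms(2) by (simp add: sum.remove[of UNIV i])
  then obtain j where "j \<in> UNIV-{i}" "v$j \<noteq> 0"
    by (metis less_irrefl sum.neutral)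
  with nonneg show thesis by (intro that[of j]) (auto simp: less_le)
qed

lemma Hfun_pos:
  assumes v: "v \<in> Delta A"
    and A_nonneg: "\<forall>i j. 0 \<le> A$i$j" and A_offdiag: "\<forall>i j. i \<noteq> j \<longrightarrow> A$i$j > 0"
  shows "Hfun A \<alpha> v > 0"
proof -
  define t where "t i j = A$i$j * v$i powr \<alpha> * v$j powr \<alpha>" for i j
  have t_nonneg: "0 \<le> t i j" for i j using A_nonneg by (simp add: t_def)
  have "\<And>k. 0 \<le> v$k" and "(\<Sum>k\<in>UNIV. v$k) = 1"
    using v by (auto simp: Delta_def)
  then obtain i where vi: "v$i > 0"
    by (metis less_eq_real_def sum.neutral zero_neq_one)
  have "\<exists>j. A$i$j > 0 \<and> v$j > 0"
  proof (cases "A$i$i = 0")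
    case True
    then have "v$i \<le> 3/4" using v by (simp add: Delta_def)
    then obtain j where "j \<noteq> i" "v$j > 0"
      using Delta_exists_other_pos[OF v] by blast
    then show ?thesis using A_offdiag by metis
  next
    case False
    then show ?thesis using A_nonneg vi by (metis order.not_eq_order_implies_strict)
  qed
  then obtain j where "A$i$j > 0" "v$j > 0" by blast
  then have "t i j > 0" using vi by (simp add: t_def zero_less_mult_iff)
  also have "t i j \<le> (\<Sum>b\<in>UNIV. t i b)"
    by (rule member_le_sum) (auto simp: t_nonneg)
  also have "\<dots> \<le> (\<Sum>a\<in>UNIV. \<Sum>b\<in>UNIV. t a b)"
    by (rule member_le_sum[where f="\<lambda>a. \<Sum>b\<in>UNIV. t a b"]) (auto intro: sum_nonneg t_nonneg)
  finally show ?thesis by (simp add: Hfun_def t_def)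
qed

lemma sum_replicator_eq_variance:
  fixes p x :: "'a \<Rightarrow> real"
  assumes "sum p S = 1" and "(\<Sum>k\<in>S. p k * x k) = H" and "H \<noteq> 0"
  shows "(\<Sum>k\<in>S. x k * (p k * x k / H - p k)) = (\<Sum>k\<in>S. p k * (x k - H)^2) / H"
proof -
  have "(\<Sum>k\<in>S. x k * (p k * x k / H - p k)) = (\<Sum>k\<in>S. p k * (x k)^2) / H - H"
    using assms(2)
    by (simp add: right_diff_distrib sum_subtractf sum_divide_distrib power2_eq_square
        mult.commute mult.left_commute)
  moreover have "(\<Sum>k\<in>S. p k * (x k - H)^2)
      = (\<Sum>k\<in>S. p k * (x k)^2) - 2 * H * (\<Sum>k\<in>S. p k * x k) + H^2 * sum p S"
    by (simp add: power2_diff algebra_simps sum.distrib sum_subtractf sum_distrib_left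
        sum_distrib_right)
  ultimately show ?thesis using assms by (simp add: field_simps power2_eq_square)
qed

theorem lemma3p2:
  fixes A :: "real^'n^'n" and \<alpha> :: real and v :: "real^'n"
  assumes "CARD('n) \<ge> 2"
    and "\<alpha> > 1"
    and "\<forall>i j. A$i$j = A$j$i"
    and "\<forall>i j. 0 \<le> A$i$j"
    and "\<forall>i j. i \<noteq> j \<longrightarrow> A$i$j > 0"
    and "\<forall>i j. (\<Sum>k\<in>UNIV. A$i$k) = (\<Sum>k\<in>UNIV. A$j$k)"
    and "v \<in> Delta A - Equil A \<alpha>"
  shows "gradH A \<alpha> v \<bullet> Ffield A \<alpha> v > 0"
proof -
  have v: "v \<in> Delta A" and not_equil: "Ffield A \<alpha> v \<noteq> 0"
    using assms(7) by (auto simp: Equil_def)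
  have nonneg: "\<forall>i. 0 \<le> v$i" and sum_v: "sum (($) v) UNIV = 1"
    using v by (auto simp: Delta_def)
  define f where "f = fitness A \<alpha> v"
  define H where "H = Hfun A \<alpha> v"
  have H_pos: "H > 0" using Hfun_pos[OF v assms(4,5)] by (simp add: H_def)
  have mean: "(\<Sum>k\<in>UNIV. v$k * f k) = H"
    using Hfun_eq_sum_fitness[OF nonneg] by (simp add: f_def H_def)
  have inner: "gradH A \<alpha> v \<bullet> Ffield A \<alpha> v = 2 * \<alpha> * ((\<Sum>k\<in>UNIV. v$k * (f k - H)^2) / H)"
    using sum_replicator_eq_variance[OF sum_v mean] H_pos
    by (simp add: inner_vec_def gradH_eq_fitness[OF assms(3)] Ffield_Delta[OF v]
        f_def H_def sum_distrib_left[symmetric] mult.assoc)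
  have "(\<Sum>k\<in>UNIV. v$k * (f k - H)^2) \<noteq> 0"
  proof
    assume "(\<Sum>k\<in>UNIV. v$k * (f k - H)^2) = 0"
    then have "v$k = 0 \<or> f k = H" for k
      using nonneg by (simp add: sum_nonneg_eq_0_iff)
    then have "v$k * f k / H - v$k = 0" for k
      using H_pos by (metis diff_self div_0 mult_zero_left nonzero_mult_div_cancel_right
          order_less_irrefl)
    then have "Ffield A \<alpha> v $ k = 0" for k
      by (simp add: Ffield_Delta[OF v] f_def H_def)
    then have "Ffield A \<alpha> v = 0" by (simp add: vec_eq_iff)
    with not_equil show False ..
  qed
  moreover have "(\<Sum>k\<in>UNIV. v$k * (f k - H)^2) \<ge> 0"
    using nonneg by (simp add: sum_nonneg)
  ultimately show ?thesis using inner H_pos assms(2) by simp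
qed

end
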